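(* Let $m\ge5$ be odd and $h=\frac{m-1}{2}$. For every $j\in\Gamma_{(h)}$: (i) if $j\neq1$, then $j+2^{h+1}$ is the coset leader of $C_{j+2^{h+1}}$, and the coset leader of $C_{1+2^{h+1}}$ is $1+2^h$; (ii) $|C_{j+2^{h+1}}|=m$.
   Context: Let $v=2^m-1$. For an integer $i$, $C_i=\{i\cdot 2^s \bmod v: s\ge 0\}$ is the $2$-cyclotomic coset of $i$ modulo $v$, and its least element is its coset leader. For a positive integer $t$, $\Gamma_{(t)}=\{j:1\le j\le 2^t-1,\ j\text{ odd}\}$. *)

theory Defs
  imports Main
begin

definition cyc_coset :: "nat \<Rightarrow> nat \<Rightarrow> nat set" where
  "cyc_coset m i = {(i * 2 ^ s) mod (2 ^ m - 1) | s. True}"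

definition coset_leader :: "nat \<Rightarrow> nat \<Rightarrow> nat" where
  "coset_leader m i = Min (cyc_coset m i)"

definition Gamma :: "nat \<Rightarrow> nat set" where
  "Gamma t = {j. 1 \<le> j \<and> j \<le> 2 ^ t - 1 \<and> odd j}"

end

theory Submission
  imports Defs "HOL-Number_Theory.Cong"
begin

(* Multiplying by 2 modulo 2^m - 1 rotates the m-bit binary word of a number cyclically, so
   C_i is the set of rotations of i and has m elements as soon as no rotation by
   0 < d < m fixes i. For m = 2h+1 and odd j < 2^h, the word of x = j + 2^(h+1) has its top
   h - 1 bits zero, then the bits 1 0, then the h bits of j. A rotation by s either shifts the
   leading 1 higher (s < h), wraps it to the bottom while moving j up (s = h), or wraps the
   odd low part of j into the high bits (s > h); in each case the result exceeds x, except
   for j = 1 and s = h, where the rotation is 1 + 2^h. *)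

lemma pow2_cong_one_mersenne: "[(2::nat) ^ m = 1] (mod 2 ^ m - 1)"
proof -
  have "(2::nat) ^ m = (2 ^ m - 1) + 1" by simp
  also have "[\<dots> = 1] (mod 2 ^ m - 1)" by (simp only: cong_def mod_add_self1)
  finally show ?thesis .
qed

lemma mult_pow2_mod_mersenne_period:
  fixes i s m :: nat
  shows "i * 2 ^ s mod (2 ^ m - 1) = i * 2 ^ (s mod m) mod (2 ^ m - 1)"
proof -
  have "[(2 ^ m) ^ (s div m) = (1::nat)] (mod 2 ^ m - 1)"
    using cong_pow[OF pow2_cong_one_mersenne] by simp
  then have "[i * 2 ^ (s mod m) * (2 ^ m) ^ (s div m) = i * 2 ^ (s mod m)] (mod 2 ^ m - 1)"
    using cong_scalar_left by fastforce
  moreover have "i * 2 ^ (s mod m) * (2 ^ m) ^ (s div m) = i * 2 ^ s"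
    by (simp flip: power_mult power_add)
  ultimately show ?thesis by (simp add: cong_def)
qed

lemma cyc_coset_eq_image:
  assumes "0 < m"
  shows "cyc_coset m i = (\<lambda>s. i * 2 ^ s mod (2 ^ m - 1)) ` {..<m}"
proof (intro equalityI subsetI)
  fix y assume "y \<in> cyc_coset m i"
  then obtain s where "y = i * 2 ^ s mod (2 ^ m - 1)" unfolding cyc_coset_def by blast
  show "y \<in> (\<lambda>s. i * 2 ^ s mod (2 ^ m - 1)) ` {..<m}"
  proof (rule image_eqI)
    show "y = i * 2 ^ (s mod m) mod (2 ^ m - 1)"
      using \<open>y = _\<close> mult_pow2_mod_mersenne_period by (rule trans)
  qed (simp add: assms)
qed (auto simp: cyc_coset_def)

lemma rotation_in_cyc_coset: "i * 2 ^ s mod (2 ^ m - 1) \<in> cyc_coset m i"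
  unfolding cyc_coset_def by blast

lemma coset_leader_eqI:
  assumes "0 < m" and "a \<in> cyc_coset m i"
    and "\<And>s. s < m \<Longrightarrow> a \<le> i * 2 ^ s mod (2 ^ m - 1)"
  shows "coset_leader m i = a"
  unfolding coset_leader_def
  using assms by (intro Min_eqI) (auto simp: cyc_coset_eq_image)

lemma card_cyc_coset_eqI:
  fixes m i :: nat
  assumes "i < 2 ^ m - 1"
    and no_fix: "\<And>d. 0 < d \<Longrightarrow> d < m \<Longrightarrow> i * 2 ^ d mod (2 ^ m - 1) \<noteq> i"
  shows "card (cyc_coset m i) = m"
proof -
  have "0 < m" using assms(1) by (cases m) auto
  have no_collision: "i * 2 ^ r mod (2 ^ m - 1) \<noteq> i * 2 ^ s mod (2 ^ m - 1)"
    if "r < s" "s < m" for r s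
  proof
    assume "i * 2 ^ r mod (2 ^ m - 1) = i * 2 ^ s mod (2 ^ m - 1)"
    then have "[i * 2 ^ r * 2 ^ (m - s) = i * 2 ^ s * 2 ^ (m - s)] (mod 2 ^ m - 1)"
      unfolding cong_def[symmetric] by (rule cong_scalar_right)
    also have "i * 2 ^ s * 2 ^ (m - s) = i * 2 ^ (s + (m - s))"
      by (simp only: mult.assoc power_add)
    also have "\<dots> = i * 2 ^ m"
      using that by simp
    also have "[i * 2 ^ m = i] (mod 2 ^ m - 1)"
      using mult_pow2_mod_mersenne_period[of i m m] by (simp add: cong_def)
    finally have "[i * 2 ^ (r + (m - s)) = i] (mod 2 ^ m - 1)"
      by (simp only: mult.assoc power_add)
    then have "i * 2 ^ (r + (m - s)) mod (2 ^ m - 1) = i"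
      using assms(1) by (simp add: cong_def)
    moreover have "0 < r + (m - s)" "r + (m - s) < m" using that by auto
    ultimately show False using no_fix[of "r + (m - s)"] by simp
  qed
  have "inj_on (\<lambda>s. i * 2 ^ s mod (2 ^ m - 1)) {..<m}"
  proof (rule inj_onI)
    fix r s assume "r \<in> {..<m}" "s \<in> {..<m}"
      and "i * 2 ^ r mod (2 ^ m - 1) = i * 2 ^ s mod (2 ^ m - 1)"
    then show "r = s"
      using no_collision[of r s] no_collision[of s r] by (cases r s rule: linorder_cases) auto
  qed
  then show ?thesis
    using \<open>0 < m\<close> by (simp add: cyc_coset_eq_image card_image)
qed

context
  fixes h j :: nat
  assumes h_ge: "2 \<le> h" and j_odd: "odd j" and j_less: "j < 2 ^ h"
begin

lemma block_less_modulus: "j + 2 ^ (h + 1) < 2 ^ (2 * h + 1) - 1"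
proof -
  have "(2::nat) ^ (h + 2) \<le> 2 ^ (2 * h)" using h_ge by (intro power_increasing) auto
  then show ?thesis using j_less by (simp add: power_add mult_2)
qed

lemma rotation_below_h:
  assumes "s < h"
  shows "(j + 2 ^ (h + 1)) * 2 ^ s mod (2 ^ (2 * h + 1) - 1) = j * 2 ^ s + 2 ^ (h + 1 + s)"
proof -
  have "j * 2 ^ s < 2 ^ (h + s)" using j_less by (simp add: power_add)
  moreover have "(2::nat) ^ (h + s + 2) \<le> 2 ^ (2 * h + 1)"
    using assms by (intro power_increasing) auto
  moreover have "(2::nat) ^ (h + s + 2) = 4 * 2 ^ (h + s)" "(2::nat) ^ (h + 1 + s) = 2 * 2 ^ (h + s)"
    by (simp_all add: power_add)
  moreover have "(1::nat) \<le> 2 ^ (h + s)" by simp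
  ultimately have "j * 2 ^ s + 2 ^ (h + 1 + s) < 2 ^ (2 * h + 1) - 1" by linarith
  moreover have "(j + 2 ^ (h + 1)) * 2 ^ s = j * 2 ^ s + 2 ^ (h + 1 + s)"
    by (simp add: algebra_simps power_add)
  ultimately show ?thesis by simp
qed

lemma rotation_at_h:
  "(j + 2 ^ (h + 1)) * 2 ^ h mod (2 ^ (2 * h + 1) - 1) = 1 + j * 2 ^ h"
proof -
  have "(j + 2 ^ (h + 1)) * 2 ^ h = j * 2 ^ h + 2 ^ (2 * h + 1)"
    by (simp add: distrib_right flip: power_add)
  also have "[\<dots> = j * 2 ^ h + 1] (mod 2 ^ (2 * h + 1) - 1)"
    by (intro cong_add cong_refl pow2_cong_one_mersenne)
  finally have "[(j + 2 ^ (h + 1)) * 2 ^ h = 1 + j * 2 ^ h] (mod 2 ^ (2 * h + 1) - 1)"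
    by (simp add: add.commute)
  moreover have "j * 2 ^ h < 2 ^ (2 * h)" using j_less by (simp add: mult_2 power_add)
  moreover have "(1::nat) < 2 ^ (2 * h)" using h_ge by (intro one_less_power) auto
  ultimately show ?thesis by (simp add: cong_def)
qed

lemma rotation_above_h:
  assumes "h < s" "s \<le> 2 * h"
  shows "(j + 2 ^ (h + 1)) * 2 ^ s mod (2 ^ (2 * h + 1) - 1)
    = j div 2 ^ (2 * h + 1 - s) + j mod 2 ^ (2 * h + 1 - s) * 2 ^ s + 2 ^ (s - h)"
proof -
  define u where "u = 2 * h + 1 - s"
  define t where "t = s - h - 1"
  define a where "a = j div 2 ^ u"
  define b where "b = j mod 2 ^ u"
  have s_eq: "s = h + 1 + t" and u_eq: "u + t = h"
    using assms unfolding u_def t_def by auto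
  have wrap: "(2::nat) ^ u * 2 ^ s = 2 ^ (2 * h + 1)"
    using u_eq s_eq by (simp flip: power_add)
  have j_eq: "j = a * 2 ^ u + b" unfolding a_def b_def by (rule div_mult_mod_eq[symmetric])
  have "(2::nat) ^ (h + 1) * 2 ^ s = 2 ^ (s - h) * 2 ^ (2 * h + 1)"
    using s_eq by (simp flip: power_add)
  then have "(j + 2 ^ (h + 1)) * 2 ^ s = a * (2 ^ u * 2 ^ s) + b * 2 ^ s + 2 ^ (s - h) * 2 ^ (2 * h + 1)"
    by (subst j_eq) (simp add: algebra_simps)
  also have "[\<dots> = a * 1 + b * 2 ^ s + 2 ^ (s - h) * 1] (mod 2 ^ (2 * h + 1) - 1)"
    unfolding wrap by (intro cong_add cong_mult cong_refl pow2_cong_one_mersenne)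
  finally have cong: "[(j + 2 ^ (h + 1)) * 2 ^ s = a + b * 2 ^ s + 2 ^ (s - h)] (mod 2 ^ (2 * h + 1) - 1)"
    by simp
  have "j < 2 ^ t * 2 ^ u" using j_less u_eq by (simp add: add.commute flip: power_add)
  then have "a < 2 ^ t" unfolding a_def by (rule less_mult_imp_div_less)
  moreover have "(b + 1) * 2 ^ s \<le> 2 ^ u * 2 ^ s"
    unfolding b_def by (intro mult_right_mono) (auto simp: Suc_le_eq)
  moreover have "(2::nat) ^ (t + 3) \<le> 2 ^ s" using s_eq h_ge by (intro power_increasing) auto
  moreover have "(2::nat) ^ (t + 3) = 8 * 2 ^ t" "(2::nat) ^ (s - h) = 2 * 2 ^ t"
    using s_eq by (simp_all add: power_add)
  ultimately have "a + b * 2 ^ s + 2 ^ (s - h) < 2 ^ (2 * h + 1) - 1"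
    using wrap by (simp add: algebra_simps)
  with cong show ?thesis
    unfolding u_def[symmetric] a_def[symmetric] b_def[symmetric] by (simp add: cong_def)
qed

lemma block_less_pow: "j + 2 ^ (h + 1) < 2 ^ (h + 2)"
  using j_less by (simp add: power_add)

lemma rotation_above_h_greater:
  assumes "h < s" "s \<le> 2 * h"
  shows "j + 2 ^ (h + 1) < (j + 2 ^ (h + 1)) * 2 ^ s mod (2 ^ (2 * h + 1) - 1)"
proof (cases "s = h + 1")
  case True
  then have "(j + 2 ^ (h + 1)) * 2 ^ s mod (2 ^ (2 * h + 1) - 1) = j * 2 ^ (h + 1) + 2"
    using rotation_above_h[OF assms] j_less by simp
  moreover obtain k where "j = Suc k" using j_odd by (cases j) auto
  then have "j * 2 ^ (h + 1) = 2 ^ (h + 1) + k * 2 ^ (h + 1)" by simp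
  moreover have "k \<le> k * 2 ^ (h + 1)" by simp
  ultimately show ?thesis using \<open>j = Suc k\<close> by linarith
next
  case False
  have "odd (j mod 2 ^ (2 * h + 1 - s))"
    using j_odd assms even_mod_exp_div_exp_iff[of j "2 * h + 1 - s" 0] by simp
  then have "1 \<le> j mod 2 ^ (2 * h + 1 - s)" by (simp add: odd_pos Suc_le_eq)
  then have "2 ^ s \<le> j mod 2 ^ (2 * h + 1 - s) * 2 ^ s" by simp
  moreover have "(2::nat) ^ (h + 2) \<le> 2 ^ s" using assms False by (intro power_increasing) auto
  ultimately show ?thesis using rotation_above_h[OF assms] block_less_pow by linarith
qed

lemma rotation_greater:
  assumes "0 < s" "s < 2 * h + 1" "j \<noteq> 1 \<or> s \<noteq> h"
  shows "j + 2 ^ (h + 1) < (j + 2 ^ (h + 1)) * 2 ^ s mod (2 ^ (2 * h + 1) - 1)"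
proof -
  consider "s < h" | "s = h" | "h < s" by linarith
  then show ?thesis
  proof cases
    case 1
    have "(2::nat) ^ (h + 2) \<le> 2 ^ (h + 1 + s)" using assms(1) by (intro power_increasing) auto
    then show ?thesis using rotation_below_h[OF 1] block_less_pow by simp
  next
    case 2
    with assms(3) j_odd have "3 \<le> j" by presburger
    then have "3 * 2 ^ h \<le> j * 2 ^ h" by simp
    moreover have "(2::nat) ^ (h + 1) = 2 * 2 ^ h" by simp
    ultimately have "j + 2 ^ (h + 1) < 1 + j * 2 ^ h" using j_less by linarith
    with rotation_at_h 2 show ?thesis by simp
  next
    case 3
    then show ?thesis using rotation_above_h_greater assms(2) by simp
  qed
qed

lemma rotation_ne:
  assumes "0 < s" "s < 2 * h + 1"
  shows "(j + 2 ^ (h + 1)) * 2 ^ s mod (2 ^ (2 * h + 1) - 1) \<noteq> j + 2 ^ (h + 1)"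
proof (cases "j = 1 \<and> s = h")
  case True
  then show ?thesis using rotation_at_h by simp
next
  case False
  then show ?thesis using rotation_greater[OF assms] by fastforce
qed

lemma coset_leader_block:
  assumes "j \<noteq> 1"
  shows "coset_leader (2 * h + 1) (j + 2 ^ (h + 1)) = j + 2 ^ (h + 1)"
proof (rule coset_leader_eqI)
  show "j + 2 ^ (h + 1) \<in> cyc_coset (2 * h + 1) (j + 2 ^ (h + 1))"
    using rotation_in_cyc_coset[of "j + 2 ^ (h + 1)" 0 "2 * h + 1"] block_less_modulus by simp
  show "j + 2 ^ (h + 1) \<le> (j + 2 ^ (h + 1)) * 2 ^ s mod (2 ^ (2 * h + 1) - 1)"
    if "s < 2 * h + 1" for s
    using rotation_greater[of s] that assms block_less_modulus
    by (cases "s = 0") (auto intro: less_imp_le)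
qed simp

lemma card_cyc_coset_block: "card (cyc_coset (2 * h + 1) (j + 2 ^ (h + 1))) = 2 * h + 1"
  using block_less_modulus rotation_ne by (intro card_cyc_coset_eqI) auto

end

lemma coset_leader_block_one:
  fixes h :: nat
  assumes h: "2 \<le> h"
  shows "coset_leader (2 * h + 1) (1 + 2 ^ (h + 1)) = 1 + 2 ^ h"
proof (rule coset_leader_eqI)
  have "1 < (2::nat) ^ h" using h by (intro one_less_power) auto
  then have one: "odd (1::nat)" "1 < (2::nat) ^ h" by simp_all
  show "1 + 2 ^ h \<in> cyc_coset (2 * h + 1) (1 + 2 ^ (h + 1))"
    using rotation_in_cyc_coset[of "1 + 2 ^ (h + 1)" h "2 * h + 1"] rotation_at_h[OF h one] by simp
  show "1 + 2 ^ h \<le> (1 + 2 ^ (h + 1)) * 2 ^ s mod (2 ^ (2 * h + 1) - 1 :: nat)"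
    if "s < 2 * h + 1" for s
  proof -
    have "(2::nat) ^ h < 2 ^ (h + 1)" by simp
    then show ?thesis
      using rotation_greater[OF h one, of s] rotation_at_h[OF h one] block_less_modulus[OF h one] that
      by (cases "s = 0"; cases "s = h") auto
  qed
qed simp

theorem lemma9:
  fixes m h j :: nat
  assumes "m \<ge> 5" and "odd m" and "h = (m - 1) div 2" and "j \<in> Gamma h"
  shows "(j \<noteq> 1 \<longrightarrow> coset_leader m (j + 2 ^ (h + 1)) = j + 2 ^ (h + 1))
       \<and> coset_leader m (1 + 2 ^ (h + 1)) = 1 + 2 ^ h
       \<and> card (cyc_coset m (j + 2 ^ (h + 1))) = m"
proof -
  have m: "m = 2 * h + 1" using assms(2,3) by presburger
  with assms(1) have h: "2 \<le> h" by simp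
  have "0 < (2::nat) ^ h" by simp
  with assms(4) have j: "odd j" "j < 2 ^ h" unfolding Gamma_def by auto
  show ?thesis
    unfolding m
    using coset_leader_block[OF h j] coset_leader_block_one[OF h] card_cyc_coset_block[OF h j]
    by blast
qed

end
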